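(* Let $G$ be a completable graph and let $A(G),B(G)$ be $G$-partial matrices with $0<A(G)\leq B(G)$. Then $0<\det(\widehat{A})\leq\det(\widehat{B})$, where $\widehat{A},\widehat{B}$ are the maximum determinant positive definite completions of $A(G),B(G)$.
   Context: A graph $G=(V,E)$ is a finite undirected graph on $V=\{1,\dots,n\}$ containing all loops. A $G$-partial matrix has entries specified exactly for $\{i,j\}\in E$; a completion agrees with it on $E$; differences are entrywise on $E$. It is partial positive (semi)definite if Hermitian on $E$ and every principal submatrix indexed by a clique is positive (semi)definite. $C(G)\leq D(G)$ means $D(G)-C(G)$ is partial positive semidefinite, and $0<C(G)$ means $C(G)$ is partial positive definite. $G$ is completable if every $G$-partial positive semidefinite matrix has a positive semidefinite completion (equivalently chordal). The maximum determinant positive definite completion of a partial positive definite matrix is its unique positive definite completion of largest determinant. *)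

theory Defs
  imports Complex_Main "Jordan_Normal_Form.Determinant"
begin

(* Vertices are {0..<n} (paper: {1,...,n}); E is a set of ordered pairs,
   symmetric, containing all loops. Matrices are complex n x n matrices
   (JNF type 'complex mat'); a G-partial matrix is represented by any n x n
   matrix, of which only the entries indexed by E are ever used. *)

definition graph_on :: "nat \<Rightarrow> (nat \<times> nat) set \<Rightarrow> bool" where
  "graph_on n E \<longleftrightarrow> E \<subseteq> {0..<n} \<times> {0..<n} \<and>
     (\<forall>i j. (i, j) \<in> E \<longrightarrow> (j, i) \<in> E) \<and> (\<forall>i<n. (i, i) \<in> E)"

definition clique :: "nat \<Rightarrow> (nat \<times> nat) set \<Rightarrow> nat set \<Rightarrow> bool" where
  "clique n E C \<longleftrightarrow> C \<subseteq> {0..<n} \<and> (\<forall>i\<in>C. \<forall>j\<in>C. (i, j) \<in> E)"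

definition qform :: "nat set \<Rightarrow> complex mat \<Rightarrow> (nat \<Rightarrow> complex) \<Rightarrow> complex" where
  "qform C M x = (\<Sum>i\<in>C. \<Sum>j\<in>C. cnj (x i) * M $$ (i, j) * x j)"

definition hermitian_on :: "nat set \<Rightarrow> complex mat \<Rightarrow> bool" where
  "hermitian_on C M \<longleftrightarrow> (\<forall>i\<in>C. \<forall>j\<in>C. M $$ (j, i) = cnj (M $$ (i, j)))"

definition psd_on :: "nat set \<Rightarrow> complex mat \<Rightarrow> bool" where
  "psd_on C M \<longleftrightarrow> hermitian_on C M \<and> (\<forall>x. 0 \<le> Re (qform C M x))"

definition pd_on :: "nat set \<Rightarrow> complex mat \<Rightarrow> bool" where
  "pd_on C M \<longleftrightarrow> hermitian_on C M \<and>
     (\<forall>x. (\<exists>i\<in>C. x i \<noteq> 0) \<longrightarrow> 0 < Re (qform C M x))"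

definition herm_on_edges :: "(nat \<times> nat) set \<Rightarrow> complex mat \<Rightarrow> bool" where
  "herm_on_edges E M \<longleftrightarrow> (\<forall>(i, j)\<in>E. M $$ (j, i) = cnj (M $$ (i, j)))"

definition partial_psd :: "nat \<Rightarrow> (nat \<times> nat) set \<Rightarrow> complex mat \<Rightarrow> bool" where
  "partial_psd n E M \<longleftrightarrow> M \<in> carrier_mat n n \<and> herm_on_edges E M \<and>
     (\<forall>C. clique n E C \<longrightarrow> psd_on C M)"

definition partial_pd :: "nat \<Rightarrow> (nat \<times> nat) set \<Rightarrow> complex mat \<Rightarrow> bool" where
  "partial_pd n E M \<longleftrightarrow> M \<in> carrier_mat n n \<and> herm_on_edges E M \<and>
     (\<forall>C. clique n E C \<longrightarrow> pd_on C M)"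

definition partial_le :: "nat \<Rightarrow> (nat \<times> nat) set \<Rightarrow> complex mat \<Rightarrow> complex mat \<Rightarrow> bool" where
  "partial_le n E A B \<longleftrightarrow> partial_psd n E (B - A)"

definition is_completion :: "nat \<Rightarrow> (nat \<times> nat) set \<Rightarrow> complex mat \<Rightarrow> complex mat \<Rightarrow> bool" where
  "is_completion n E A M \<longleftrightarrow> M \<in> carrier_mat n n \<and> (\<forall>(i, j)\<in>E. M $$ (i, j) = A $$ (i, j))"

definition psd_mat :: "nat \<Rightarrow> complex mat \<Rightarrow> bool" where
  "psd_mat n M \<longleftrightarrow> M \<in> carrier_mat n n \<and> psd_on {0..<n} M"

definition pd_mat :: "nat \<Rightarrow> complex mat \<Rightarrow> bool" where
  "pd_mat n M \<longleftrightarrow> M \<in> carrier_mat n n \<and> pd_on {0..<n} M"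

definition completable :: "nat \<Rightarrow> (nat \<times> nat) set \<Rightarrow> bool" where
  "completable n E \<longleftrightarrow>
     (\<forall>A. partial_psd n E A \<longrightarrow> (\<exists>M. is_completion n E A M \<and> psd_mat n M))"

(* M is a maximum determinant positive definite completion of A
   (determinants of PD matrices are real; compared via Re) *)
definition is_maxdet_completion ::
  "nat \<Rightarrow> (nat \<times> nat) set \<Rightarrow> complex mat \<Rightarrow> complex mat \<Rightarrow> bool" where
  "is_maxdet_completion n E A M \<longleftrightarrow> is_completion n E A M \<and> pd_mat n M \<and>
     (\<forall>M'. is_completion n E A M' \<and> pd_mat n M' \<longrightarrow> Re (det M') \<le> Re (det M))"

end

(* Everything is reduced to the Schur complement S(A) of the last diagonal entry a of A:
   det A = a * det S(A), and the quadratic form of S(A) at x is the minimum over t of the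
   quadratic form of A at (x, t). Induction on the dimension then shows that det is positive
   on positive definite matrices, strictly increasing in positive semidefinite directions, and
   strictly log-concave at midpoints: det A * det B <= det ((A + B) / 2)^2, with equality
   only if A = B.

   A positive definite completion of A(G) exists because subtracting e I, for one e > 0 that
   works for all cliques, keeps A(G) partial positive semidefinite; completability yields a
   completion, and adding e I back makes it positive definite. All positive definite
   completions share the diagonal of A(G), so their entries are bounded and, by Hadamard's
   inequality, so is det; by compactness the supremum of det is attained, and log-concavity
   makes the maximiser unique. Finally, if D is a positive semidefinite completion of
   B(G) - A(G), then Ahat + D is a positive definite completion of B(G), whence
   det Ahat <= det (Ahat + D) <= det Bhat. *)

theory Submission
  imports Defs "HOL-Analysis.Topology_Euclidean_Space"
begin

lemma bounded_coordinates_convergent_subseq: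
  fixes f :: "nat \<Rightarrow> 'a \<Rightarrow> 'b::heine_borel"
  assumes "finite S" and "\<And>k. k \<in> S \<Longrightarrow> bounded (range (\<lambda>n. f n k))"
  obtains l r where "strict_mono r" and "\<And>k. k \<in> S \<Longrightarrow> (\<lambda>n. f (r n) k) \<longlonglongrightarrow> l k"
proof -
  have "\<forall>d\<subseteq>S. \<exists>l r. strict_mono r \<and> (\<forall>e>0. eventually (\<lambda>n. \<forall>i\<in>d. dist (f (r n) i) (l i) < e) sequentially)"
    by (rule compact_lemma_general[where proj = "\<lambda>x k. x k" and unproj = id])
      (use assms in \<open>auto simp: image_image\<close>)
  then obtain l r where r: "strict_mono r"
    and uniform: "\<forall>e>0. eventually (\<lambda>n. \<forall>i\<in>S. dist (f (r n) i) (l i) < e) sequentially"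
    by blast
  show ?thesis
  proof (rule that[OF r])
    fix k assume "k \<in> S"
    show "(\<lambda>n. f (r n) k) \<longlonglongrightarrow> l k"
      unfolding tendsto_iff
    proof (intro allI impI)
      fix e :: real assume "0 < e"
      with uniform have "eventually (\<lambda>n. \<forall>i\<in>S. dist (f (r n) i) (l i) < e) sequentially" by blast
      then show "eventually (\<lambda>n. dist (f (r n) k) (l k) < e) sequentially"
        by eventually_elim (use \<open>k \<in> S\<close> in blast)
    qed
  qed
qed

lemma tendsto_det:
  fixes X :: "'a \<Rightarrow> 'b :: {real_normed_algebra, comm_ring_1} mat"
  assumes "\<And>k. X k \<in> carrier_mat n n" "M \<in> carrier_mat n n"
    and "\<And>i j. i < n \<Longrightarrow> j < n \<Longrightarrow> ((\<lambda>k. X k $$ (i, j)) \<longlongrightarrow> M $$ (i, j)) F"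
  shows "((\<lambda>k. det (X k)) \<longlongrightarrow> det M) F"
  unfolding det_def'[OF assms(1)] det_def'[OF assms(2)]
proof (intro tendsto_sum tendsto_mult tendsto_const tendsto_prod)
  fix p i assume "p \<in> {p. p permutes {0..<n}}" "i \<in> {0..<n}"
  then show "((\<lambda>k. X k $$ (i, p i)) \<longlongrightarrow> M $$ (i, p i)) F"
    using assms(3) by (simp add: permutes_in_image)
qed

lemma minus_mat_eq_zero_iff:
  fixes A B :: "'a :: ab_group_add mat"
  assumes "A \<in> carrier_mat n m" "B \<in> carrier_mat n m"
  shows "A - B = 0\<^sub>m n m \<longleftrightarrow> A = B"
proof
  assume eq: "A - B = 0\<^sub>m n m"
  have "A $$ (i, j) = B $$ (i, j)" if "i < n" "j < m" for i j
  proof -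
    have "A $$ (i, j) - B $$ (i, j) = (A - B) $$ (i, j)" using that assms by simp
    also have "\<dots> = 0" using eq that by simp
    finally show ?thesis by simp
  qed
  then show "A = B" using assms by (intro eq_matI) auto
qed (use assms in simp)

section \<open>Quadratic forms\<close>

lemma hermitian_on_diag_real:
  assumes "hermitian_on C A" "k \<in> C"
  shows "A $$ (k, k) = of_real (Re (A $$ (k, k)))"
proof -
  have "A $$ (k, k) = cnj (A $$ (k, k))" using assms unfolding hermitian_on_def by blast
  then show ?thesis by (simp add: complex_eq_iff)
qed

lemma qform_single:
  assumes "finite C" "k \<in> C" and "\<And>i. i \<noteq> k \<Longrightarrow> x i = 0"
  shows "qform C A x = cnj (x k) * A $$ (k, k) * x k"
proof -
  have "qform C A x = (\<Sum>i\<in>{k}. \<Sum>j\<in>C. cnj (x i) * A $$ (i, j) * x j)"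
    unfolding qform_def using assms by (intro sum.mono_neutral_right) auto
  also have "\<dots> = (\<Sum>i\<in>{k}. \<Sum>j\<in>{k}. cnj (x i) * A $$ (i, j) * x j)"
    using assms by (intro sum.cong refl sum.mono_neutral_right) auto
  finally show ?thesis by simp
qed

lemma qform_pair:
  assumes "finite C" "k \<in> C" "l \<in> C" "k \<noteq> l" and "\<And>i. i \<noteq> k \<Longrightarrow> i \<noteq> l \<Longrightarrow> x i = 0"
  shows "qform C A x = cnj (x k) * A $$ (k, k) * x k + cnj (x k) * A $$ (k, l) * x l
     + cnj (x l) * A $$ (l, k) * x k + cnj (x l) * A $$ (l, l) * x l"
proof -
  have "qform C A x = (\<Sum>i\<in>{k, l}. \<Sum>j\<in>C. cnj (x i) * A $$ (i, j) * x j)"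
    unfolding qform_def using assms by (intro sum.mono_neutral_right) auto
  also have "\<dots> = (\<Sum>i\<in>{k, l}. \<Sum>j\<in>{k, l}. cnj (x i) * A $$ (i, j) * x j)"
    using assms by (intro sum.cong refl sum.mono_neutral_right) auto
  finally show ?thesis using \<open>k \<noteq> l\<close> by (simp add: algebra_simps)
qed

lemma qform_scale:
  "qform C A (\<lambda>i. c * x i) = cnj c * c * qform C A x"
  unfolding qform_def by (simp add: sum_distrib_left algebra_simps)

lemma qform_add:
  assumes "A \<in> carrier_mat n n" "B \<in> carrier_mat n n" "C \<subseteq> {0..<n}"
  shows "qform C (A + B) x = qform C A x + qform C B x"
proof -
  have "qform C (A + B) x = (\<Sum>i\<in>C. \<Sum>j\<in>C. cnj (x i) * A $$ (i, j) * x j + cnj (x i) * B $$ (i, j) * x j)"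
    unfolding qform_def using assms by (intro sum.cong refl) (auto simp: algebra_simps subset_iff)
  then show ?thesis by (simp add: qform_def sum.distrib)
qed

lemma qform_minus:
  assumes "A \<in> carrier_mat n n" "B \<in> carrier_mat n n" "C \<subseteq> {0..<n}"
  shows "qform C (A - B) x = qform C A x - qform C B x"
proof -
  have "qform C (A - B) x = (\<Sum>i\<in>C. \<Sum>j\<in>C. cnj (x i) * A $$ (i, j) * x j - cnj (x i) * B $$ (i, j) * x j)"
    unfolding qform_def using assms by (intro sum.cong refl) (auto simp: algebra_simps subset_iff)
  then show ?thesis by (simp add: qform_def sum_subtractf)
qed

lemma qform_smult:
  assumes "A \<in> carrier_mat n n" "C \<subseteq> {0..<n}"
  shows "qform C (c \<cdot>\<^sub>m A) x = c * qform C A x"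
proof -
  have "qform C (c \<cdot>\<^sub>m A) x = (\<Sum>i\<in>C. \<Sum>j\<in>C. c * (cnj (x i) * A $$ (i, j) * x j))"
    unfolding qform_def using assms by (intro sum.cong refl) (auto simp: algebra_simps subset_iff)
  then show ?thesis by (simp add: qform_def sum_distrib_left)
qed

lemma qform_one_mat:
  assumes "C \<subseteq> {0..<n}"
  shows "qform C (1\<^sub>m n) x = of_real (\<Sum>i\<in>C. (norm (x i))\<^sup>2)"
proof -
  have "finite C" using assms finite_subset by blast
  have "(\<Sum>j\<in>C. cnj (x i) * 1\<^sub>m n $$ (i, j) * x j) = (\<Sum>j\<in>C. if i = j then cnj (x i) * x j else 0)"
    if "i \<in> C" for i
    using assms that by (intro sum.cong) (auto simp: subset_iff)
  then have "qform C (1\<^sub>m n) x = (\<Sum>i\<in>C. cnj (x i) * x i)"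
    unfolding qform_def using \<open>finite C\<close> by simp
  also have "\<dots> = of_real (\<Sum>i\<in>C. (norm (x i))\<^sup>2)"
    by (simp add: complex_norm_square mult.commute del: of_real_power)
  finally show ?thesis .
qed

lemma qform_add_scaled_one_mat:
  assumes "A \<in> carrier_mat n n" "C \<subseteq> {0..<n}"
  shows "Re (qform C (A + of_real c \<cdot>\<^sub>m 1\<^sub>m n) x) = Re (qform C A x) + c * (\<Sum>i\<in>C. (norm (x i))\<^sup>2)"
  using qform_add[OF assms(1) _ assms(2), of "of_real c \<cdot>\<^sub>m 1\<^sub>m n"] qform_smult[OF _ assms(2), of "1\<^sub>m n"]
    qform_one_mat[OF assms(2)] by simp

lemma hermitian_on_add:
  assumes "hermitian_on C A" "hermitian_on C B" "A \<in> carrier_mat n n" "B \<in> carrier_mat n n" "C \<subseteq> {0..<n}"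
  shows "hermitian_on C (A + B)"
  unfolding hermitian_on_def
proof (intro ballI)
  fix i j assume ij: "i \<in> C" "j \<in> C"
  with \<open>C \<subseteq> {0..<n}\<close> have "i < n" "j < n" by auto
  from ij have "A $$ (j, i) = cnj (A $$ (i, j))" "B $$ (j, i) = cnj (B $$ (i, j))"
    using assms(1,2) unfolding hermitian_on_def by blast+
  then show "(A + B) $$ (j, i) = cnj ((A + B) $$ (i, j))" using assms(3,4) \<open>i < n\<close> \<open>j < n\<close> by simp
qed

lemma hermitian_on_minus:
  assumes "hermitian_on C A" "hermitian_on C B" "A \<in> carrier_mat n n" "B \<in> carrier_mat n n" "C \<subseteq> {0..<n}"
  shows "hermitian_on C (A - B)"
  unfolding hermitian_on_def
proof (intro ballI)
  fix i j assume ij: "i \<in> C" "j \<in> C"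
  with \<open>C \<subseteq> {0..<n}\<close> have "i < n" "j < n" by auto
  from ij have "A $$ (j, i) = cnj (A $$ (i, j))" "B $$ (j, i) = cnj (B $$ (i, j))"
    using assms(1,2) unfolding hermitian_on_def by blast+
  then show "(A - B) $$ (j, i) = cnj ((A - B) $$ (i, j))" using assms(3,4) \<open>i < n\<close> \<open>j < n\<close> by simp
qed

lemma hermitian_on_smult:
  assumes "hermitian_on C A" "c \<in> \<real>" "A \<in> carrier_mat n n" "C \<subseteq> {0..<n}"
  shows "hermitian_on C (c \<cdot>\<^sub>m A)"
  unfolding hermitian_on_def
proof (intro ballI)
  fix i j assume ij: "i \<in> C" "j \<in> C"
  with \<open>C \<subseteq> {0..<n}\<close> have "i < n" "j < n" by auto
  from ij have "A $$ (j, i) = cnj (A $$ (i, j))" using assms(1) unfolding hermitian_on_def by blast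
  moreover have "cnj c = c" using assms(2) by (simp add: Reals_cnj_iff)
  ultimately show "(c \<cdot>\<^sub>m A) $$ (j, i) = cnj ((c \<cdot>\<^sub>m A) $$ (i, j))" using assms(3) \<open>i < n\<close> \<open>j < n\<close> by simp
qed

lemma hermitian_on_add_scaled_one_mat:
  assumes "hermitian_on C A" "A \<in> carrier_mat n n" "C \<subseteq> {0..<n}"
  shows "hermitian_on C (A + of_real c \<cdot>\<^sub>m 1\<^sub>m n)"
  unfolding hermitian_on_def
proof (intro ballI)
  fix i j assume ij: "i \<in> C" "j \<in> C"
  with \<open>C \<subseteq> {0..<n}\<close> have "i < n" "j < n" by auto
  from ij have "A $$ (j, i) = cnj (A $$ (i, j))" using assms(1) unfolding hermitian_on_def by blast
  then show "(A + of_real c \<cdot>\<^sub>m 1\<^sub>m n) $$ (j, i) = cnj ((A + of_real c \<cdot>\<^sub>m 1\<^sub>m n) $$ (i, j))"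
    using assms(2) \<open>i < n\<close> \<open>j < n\<close> by simp
qed

lemma psd_on_diag_nonneg:
  assumes "psd_on C A" "finite C" "k \<in> C"
  shows "0 \<le> Re (A $$ (k, k))"
proof -
  have "0 \<le> Re (qform C A (\<lambda>i. of_bool (i = k)))" using assms(1) unfolding psd_on_def by blast
  then show ?thesis using qform_single[OF assms(2,3), of "\<lambda>i. of_bool (i = k)"] by simp
qed

lemma pd_on_diag_pos:
  assumes "pd_on C A" "finite C" "k \<in> C"
  shows "0 < Re (A $$ (k, k))"
proof -
  have "0 < Re (qform C A (\<lambda>i. of_bool (i = k)))" using assms(1,3) unfolding pd_on_def by force
  then show ?thesis using qform_single[OF assms(2,3), of "\<lambda>i. of_bool (i = k)"] by simp
qed

lemma pd_on_imp_psd_on: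
  assumes "pd_on C A" shows "psd_on C A"
  unfolding psd_on_def
proof (intro conjI allI)
  show "hermitian_on C A" using assms unfolding pd_on_def by blast
  fix x :: "nat \<Rightarrow> complex"
  show "0 \<le> Re (qform C A x)"
  proof (cases "\<exists>i\<in>C. x i \<noteq> 0")
    case True then show ?thesis using assms unfolding pd_on_def by (blast intro: less_imp_le)
  next
    case False then show ?thesis by (simp add: qform_def)
  qed
qed

lemma pd_mat_imp_psd_mat: "pd_mat n A \<Longrightarrow> psd_mat n A"
  unfolding pd_mat_def psd_mat_def using pd_on_imp_psd_on by blast

lemma pd_on_add_psd_on:
  assumes "pd_on C A" "psd_on C P" "A \<in> carrier_mat n n" "P \<in> carrier_mat n n" "C \<subseteq> {0..<n}"
  shows "pd_on C (A + P)"
  using assms hermitian_on_add[of C A P n] unfolding pd_on_def psd_on_def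
  by (auto simp: qform_add intro: add_pos_nonneg)

lemma pd_mat_add_psd_mat:
  assumes "pd_mat n A" "psd_mat n P"
  shows "pd_mat n (A + P)"
  using assms pd_on_add_psd_on[of "{0..<n}" A P n] unfolding pd_mat_def psd_mat_def by auto

lemma pd_on_midpoint:
  assumes "pd_on C A" "pd_on C B" "A \<in> carrier_mat n n" "B \<in> carrier_mat n n" "C \<subseteq> {0..<n}"
  shows "pd_on C ((1 / 2) \<cdot>\<^sub>m (A + B))"
proof -
  have AB: "A + B \<in> carrier_mat n n" using assms by simp
  have pd: "pd_on C (A + B)"
    using assms by (intro pd_on_add_psd_on[of C A B n] pd_on_imp_psd_on) auto
  show ?thesis
    unfolding pd_on_def
  proof (intro conjI allI impI)
    show "hermitian_on C ((1 / 2) \<cdot>\<^sub>m (A + B))"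
      using pd hermitian_on_smult[OF _ _ AB assms(5)] unfolding pd_on_def by simp
    fix x :: "nat \<Rightarrow> complex" assume "\<exists>i\<in>C. x i \<noteq> 0"
    then have "0 < Re (qform C (A + B) x)" using pd unfolding pd_on_def by blast
    then show "0 < Re (qform C ((1 / 2) \<cdot>\<^sub>m (A + B)) x)"
      unfolding qform_smult[OF AB assms(5)] by simp
  qed
qed

lemma pd_mat_midpoint:
  assumes "pd_mat n A" "pd_mat n B"
  shows "pd_mat n ((1 / 2) \<cdot>\<^sub>m (A + B))"
  using assms pd_on_midpoint[of "{0..<n}" A B n] unfolding pd_mat_def by auto

lemma psd_2x2_norm_sq_le:
  fixes a d :: real and b :: complex
  assumes psd: "\<And>x y. 0 \<le> Re (cnj x * a * x + cnj x * b * y + cnj y * cnj b * x + cnj y * d * y)"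
  shows "(norm b)\<^sup>2 \<le> a * d"
proof -
  have "0 \<le> a" using psd[of 1 0] by simp
  have "0 \<le> d" using psd[of 0 1] by simp
  note nb = cmod_power2[of b]
  have h1: "0 \<le> a * (a * d - (norm b)\<^sup>2)"
    using psd[of "- b" a] unfolding nb by (simp add: algebra_simps power2_eq_square)
  have h2: "0 \<le> d * (a * d - (norm b)\<^sup>2)"
    using psd[of d "- cnj b"] unfolding nb by (simp add: algebra_simps power2_eq_square)
  have h3: "0 \<le> a * (norm b)\<^sup>2 - 2 * (norm b)\<^sup>2 + d"
    using psd[of "- b" 1] unfolding nb by (simp add: algebra_simps power2_eq_square)
  consider "0 < a" | "0 < d" | "a = 0" "d = 0" using \<open>0 \<le> a\<close> \<open>0 \<le> d\<close> by linarith
  then show ?thesis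
  proof cases
    case 1 with h1 show ?thesis by (simp add: zero_le_mult_iff)
  next
    case 2 with h2 show ?thesis by (simp add: zero_le_mult_iff)
  next
    case 3 with h3 show ?thesis by simp
  qed
qed

lemma psd_on_norm_sq_le:
  assumes psd: "psd_on C A" and C: "finite C" "i \<in> C" "j \<in> C"
  shows "(norm (A $$ (i, j)))\<^sup>2 \<le> Re (A $$ (i, i)) * Re (A $$ (j, j))"
proof -
  have herm: "hermitian_on C A" using psd unfolding psd_on_def by blast
  obtain ai aj where ai: "A $$ (i, i) = of_real ai" and aj: "A $$ (j, j) = of_real aj"
    using hermitian_on_diag_real[OF herm] C by metis
  show ?thesis
  proof (cases "i = j")
    case True
    then show ?thesis using ai by (simp add: power2_eq_square)
  next
    case False
    have conj: "A $$ (j, i) = cnj (A $$ (i, j))" using herm C unfolding hermitian_on_def by blast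
    have "(norm (A $$ (i, j)))\<^sup>2 \<le> ai * aj"
    proof (rule psd_2x2_norm_sq_le)
      fix x y :: complex
      let ?z = "\<lambda>l. if l = i then x else if l = j then y else 0"
      have "0 \<le> Re (qform C A ?z)" using psd unfolding psd_on_def by blast
      then show "0 \<le> Re (cnj x * ai * x + cnj x * A $$ (i, j) * y + cnj y * cnj (A $$ (i, j)) * x + cnj y * aj * y)"
        using False by (simp add: qform_pair[OF C False] conj ai aj)
    qed
    then show ?thesis using ai aj by simp
  qed
qed

lemma psd_on_limit:
  assumes "\<And>k. psd_on C (X k)" and "\<And>i j. i \<in> C \<Longrightarrow> j \<in> C \<Longrightarrow> (\<lambda>k. X k $$ (i, j)) \<longlonglongrightarrow> M $$ (i, j)"
  shows "psd_on C M"
  unfolding psd_on_def hermitian_on_def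
proof (intro conjI allI ballI)
  fix i j assume "i \<in> C" "j \<in> C"
  then have "X k $$ (j, i) = cnj (X k $$ (i, j))" for k
    using assms(1) unfolding psd_on_def hermitian_on_def by blast
  then have "(\<lambda>k. X k $$ (j, i)) \<longlonglongrightarrow> cnj (M $$ (i, j))"
    using assms(2) \<open>i \<in> C\<close> \<open>j \<in> C\<close> by (simp add: tendsto_cnj)
  then show "M $$ (j, i) = cnj (M $$ (i, j))" using assms(2) \<open>i \<in> C\<close> \<open>j \<in> C\<close> LIMSEQ_unique by blast
next
  fix x :: "nat \<Rightarrow> complex"
  have "(\<lambda>k. Re (qform C (X k) x)) \<longlonglongrightarrow> Re (qform C M x)"
    unfolding qform_def using assms(2) by (intro tendsto_intros) auto
  then show "0 \<le> Re (qform C M x)" using assms(1) unfolding psd_on_def by (meson LIMSEQ_le_const)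
qed

lemma pd_on_unit_sphere_bounded_below:
  assumes fin: "finite C" and pd: "pd_on C A"
  obtains e where "0 < e" "\<And>y. (\<Sum>i\<in>C. (norm (y i))\<^sup>2) = 1 \<Longrightarrow> e \<le> Re (qform C A y)"
proof (rule ccontr)
  assume "\<not> thesis"
  with that have "\<exists>y. (\<Sum>i\<in>C. (norm (y i))\<^sup>2) = 1 \<and> Re (qform C A y) < inverse (real (Suc k))" for k
    by (meson inverse_positive_iff_positive not_le of_nat_0_less_iff zero_less_Suc)
  then obtain Y where Y: "\<And>k. (\<Sum>i\<in>C. (norm (Y k i))\<^sup>2) = 1"
    and small: "\<And>k. Re (qform C A (Y k)) < inverse (real (Suc k))" by metis
  have "norm (Y k i) \<le> 1" if "i \<in> C" for k i
    using member_le_sum[of i C "\<lambda>i. (norm (Y k i))\<^sup>2"] fin that Y[of k] by (simp add: power_le_one_iff)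
  then have "bounded (range (\<lambda>k. Y k i))" if "i \<in> C" for i
    using that unfolding bounded_iff by blast
  then obtain y r where r: "strict_mono r" and lim: "\<And>i. i \<in> C \<Longrightarrow> (\<lambda>k. Y (r k) i) \<longlonglongrightarrow> y i"
    using bounded_coordinates_convergent_subseq[OF fin] by metis
  have "(\<lambda>k. \<Sum>i\<in>C. (norm (Y (r k) i))\<^sup>2) \<longlonglongrightarrow> (\<Sum>i\<in>C. (norm (y i))\<^sup>2)"
    using lim by (intro tendsto_intros)
  then have "(\<Sum>i\<in>C. (norm (y i))\<^sup>2) = 1" using Y by (simp add: LIMSEQ_const_iff)
  then have "\<exists>i\<in>C. y i \<noteq> 0" by (metis (no_types, lifting) norm_zero sum.neutral zero_neq_one zero_power2)
  then have "0 < Re (qform C A y)" using pd unfolding pd_on_def by blast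
  moreover have "(\<lambda>k. Re (qform C A (Y (r k)))) \<longlonglongrightarrow> Re (qform C A y)"
    unfolding qform_def using lim by (intro tendsto_intros)
  moreover have "(\<lambda>k. inverse (real (Suc (r k)))) \<longlonglongrightarrow> 0"
    using LIMSEQ_subseq_LIMSEQ[OF LIMSEQ_inverse_real_of_nat r] by (simp add: comp_def)
  ultimately show False
    using LIMSEQ_le[of _ "Re (qform C A y)" _ 0] small less_imp_le by (metis not_le)
qed

lemma pd_on_coercive:
  assumes fin: "finite C" and pd: "pd_on C A"
  obtains e where "0 < e" "\<And>x. e * (\<Sum>i\<in>C. (norm (x i))\<^sup>2) \<le> Re (qform C A x)"
proof -
  obtain e where e: "0 < e" "\<And>y. (\<Sum>i\<in>C. (norm (y i))\<^sup>2) = 1 \<Longrightarrow> e \<le> Re (qform C A y)"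
    using pd_on_unit_sphere_bounded_below[OF assms] by blast
  have "e * (\<Sum>i\<in>C. (norm (x i))\<^sup>2) \<le> Re (qform C A x)" for x
  proof (cases "\<exists>i\<in>C. x i \<noteq> 0")
    case True
    then obtain k where "k \<in> C" "x k \<noteq> 0" by blast
    define N where "N = (\<Sum>i\<in>C. (norm (x i))\<^sup>2)"
    have N: "0 < N" unfolding N_def using fin \<open>k \<in> C\<close> \<open>x k \<noteq> 0\<close> by (intro sum_pos2[of C k]) auto
    define c where "c = inverse (sqrt N)"
    have c: "c\<^sup>2 * N = 1" unfolding c_def using N by (simp add: power_inverse)
    let ?y = "\<lambda>i. of_real c * x i"
    have "(\<Sum>i\<in>C. (norm (?y i))\<^sup>2) = c\<^sup>2 * N"
      unfolding N_def by (simp add: norm_mult power_mult_distrib sum_distrib_left)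
    then have "e \<le> Re (qform C A ?y)" using e(2) c by simp
    also have "Re (qform C A ?y) = c\<^sup>2 * Re (qform C A x)"
      by (simp add: qform_scale power2_eq_square)
    finally have "e * N \<le> c\<^sup>2 * N * Re (qform C A x)" using N by (simp add: mult.commute)
    then have "e * N \<le> Re (qform C A x)" using c by simp
    then show ?thesis unfolding N_def .
  next
    case False
    then show ?thesis by (simp add: qform_def)
  qed
  with e(1) show ?thesis using that by blast
qed

section \<open>Schur complements\<close>

definition schur_compl :: "nat \<Rightarrow> complex mat \<Rightarrow> complex mat" where
  "schur_compl m A = Matrix.mat m m (\<lambda>(i, j). A $$ (i, j) - A $$ (i, m) * A $$ (m, j) / A $$ (m, m))"

lemma schur_compl_dim [simp]: "dim_row (schur_compl m A) = m" "dim_col (schur_compl m A) = m"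
  by (simp_all add: schur_compl_def)

lemma schur_compl_carrier [simp]: "schur_compl m A \<in> carrier_mat m m"
  by (simp add: carrier_matI)

lemma schur_compl_index [simp]:
  "i < m \<Longrightarrow> j < m \<Longrightarrow> schur_compl m A $$ (i, j) = A $$ (i, j) - A $$ (i, m) * A $$ (m, j) / A $$ (m, m)"
  by (simp add: schur_compl_def)

lemma det_schur_compl:
  assumes A: "A \<in> carrier_mat (Suc m) (Suc m)" and piv: "A $$ (m, m) \<noteq> 0"
  shows "det A = A $$ (m, m) * det (schur_compl m A)"
proof -
  \<comment> \<open>Subtracting multiples of the last row clears the last column above the pivot.\<close>
  define L where "L = Matrix.mat (Suc m) (Suc m)
    (\<lambda>(i, j). if i = j then 1 else if j = m then - A $$ (i, m) / A $$ (m, m) else 0)"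
  have L: "L \<in> carrier_mat (Suc m) (Suc m)" by (simp add: L_def)
  have "upper_triangular L" by (auto simp: upper_triangular_def L_def)
  moreover have "diag_mat L = replicate (Suc m) 1"
    by (auto simp: diag_mat_def L_def simp del: upt_Suc replicate_Suc intro!: nth_equalityI)
  ultimately have "det L = 1" using det_upper_triangular[OF _ L] by simp
  define Y where "Y = L * A"
  have Y: "Y \<in> carrier_mat (Suc m) (Suc m)" unfolding Y_def using L A by auto
  have Y_index: "Y $$ (i, j) = (if i < m then A $$ (i, j) - A $$ (i, m) * A $$ (m, j) / A $$ (m, m) else A $$ (i, j))"
    if "i < Suc m" "j < Suc m" for i j
  proof -
    have "Y $$ (i, j) = (\<Sum>l\<in>{0..<Suc m}. L $$ (i, l) * A $$ (l, j))"
      unfolding Y_def using that L A by (simp add: scalar_prod_def)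
    also have "\<dots> = (\<Sum>l\<in>{i, m}. L $$ (i, l) * A $$ (l, j))"
      using that by (intro sum.mono_neutral_right) (auto simp: L_def)
    finally show ?thesis using that by (cases "i = m") (auto simp: L_def)
  qed
  have "det A = det Y" unfolding Y_def using det_mult[OF L A] \<open>det L = 1\<close> by simp
  also have "\<dots> = (\<Sum>i<Suc m. Y $$ (i, m) * cofactor Y i m)"
    using laplace_expansion_column[OF Y] by simp
  also have "\<dots> = (\<Sum>i\<in>{m}. Y $$ (i, m) * cofactor Y i m)"
    using piv by (intro sum.mono_neutral_right) (auto simp: Y_index)
  also have "mat_delete Y m m = schur_compl m A"
    using Y by (intro eq_matI) (auto simp: mat_delete_def Y_index schur_compl_def)
  then have "(\<Sum>i\<in>{m}. Y $$ (i, m) * cofactor Y i m) = A $$ (m, m) * det (schur_compl m A)"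
    by (simp add: cofactor_def Y_index)
  finally show ?thesis .
qed

lemma qform_Suc:
  "qform {0..<Suc m} A y = qform {0..<m} A y + (\<Sum>i = 0..<m. cnj (y i) * A $$ (i, m)) * y m
     + cnj (y m) * (\<Sum>j = 0..<m. A $$ (m, j) * y j) + cnj (y m) * A $$ (m, m) * y m"
  unfolding qform_def by (simp add: sum.distrib sum_distrib_left sum_distrib_right mult.assoc)

lemma qform_schur_compl:
  "qform {0..<m} (schur_compl m A) x = qform {0..<m} A x
     - (\<Sum>i = 0..<m. cnj (x i) * A $$ (i, m)) * (\<Sum>j = 0..<m. A $$ (m, j) * x j) / A $$ (m, m)"
proof -
  have "qform {0..<m} (schur_compl m A) x = (\<Sum>i = 0..<m. \<Sum>j = 0..<m. cnj (x i) * A $$ (i, j) * x j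
      - (cnj (x i) * A $$ (i, m)) * (A $$ (m, j) * x j) / A $$ (m, m))"
    unfolding qform_def by (intro sum.cong refl) (simp add: algebra_simps)
  then show ?thesis
    by (simp add: qform_def sum_subtractf sum_product sum_divide_distrib)
qed

lemma qform_schur_compl_square:
  fixes x :: "nat \<Rightarrow> complex"
  assumes herm: "hermitian_on {0..<Suc m} A" and piv: "A $$ (m, m) \<noteq> 0"
  defines "u \<equiv> (\<Sum>j = 0..<m. A $$ (m, j) * x j)"
  shows "qform {0..<Suc m} A (x(m := t)) = qform {0..<m} (schur_compl m A) x
           + A $$ (m, m) * cnj (t + u / A $$ (m, m)) * (t + u / A $$ (m, m))"
proof -
  let ?a = "A $$ (m, m)"
  have "A $$ (i, m) = cnj (A $$ (m, i))" if "i < m" for i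
    using herm that unfolding hermitian_on_def by (metis atLeastLessThan_iff less_Suc_eq zero_le)
  then have col: "(\<Sum>i = 0..<m. cnj (x i) * A $$ (i, m)) = cnj u"
    unfolding u_def by (simp add: mult.commute)
  have real: "cnj ?a = ?a"
    using hermitian_on_diag_real[OF herm, of m] by (metis Reals_cnj_iff Reals_of_real atLeastLessThan_iff lessI zero_le)
  have "(\<Sum>j = 0..<m. A $$ (m, j) * (x(m := t)) j) = u"
    unfolding u_def by (intro sum.cong) auto
  moreover have "(\<Sum>i = 0..<m. cnj ((x(m := t)) i) * A $$ (i, m)) = cnj u"
    unfolding col[symmetric] by (intro sum.cong) auto
  moreover have "qform {0..<m} A (x(m := t)) = qform {0..<m} A x"
    unfolding qform_def by (intro sum.cong) auto
  ultimately have "qform {0..<Suc m} A (x(m := t)) = qform {0..<m} A x + cnj u * t + cnj t * u + cnj t * ?a * t"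
    by (simp only: qform_Suc fun_upd_same)
  moreover have "qform {0..<m} (schur_compl m A) x = qform {0..<m} A x - cnj u * u / ?a"
    unfolding qform_schur_compl col u_def ..
  moreover have "?a * cnj (t + u / ?a) * (t + u / ?a) = cnj t * ?a * t + cnj t * u + cnj u * t + cnj u * u / ?a"
    using piv real by (simp add: field_simps)
  ultimately show ?thesis
    by (simp add: algebra_simps)
qed

lemma hermitian_on_schur_compl:
  assumes herm: "hermitian_on {0..<Suc m} A"
  shows "hermitian_on {0..<m} (schur_compl m A)"
  unfolding hermitian_on_def
proof (intro ballI)
  fix i j assume "i \<in> {0..<m}" "j \<in> {0..<m}"
  then have "A $$ (j, i) = cnj (A $$ (i, j))" "A $$ (m, i) = cnj (A $$ (i, m))"
    "A $$ (j, m) = cnj (A $$ (m, j))" "A $$ (m, m) = cnj (A $$ (m, m))"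
    using herm unfolding hermitian_on_def by (metis atLeastLessThan_iff less_SucI lessI zero_le)+
  with \<open>i \<in> {0..<m}\<close> \<open>j \<in> {0..<m}\<close>
  show "schur_compl m A $$ (j, i) = cnj (schur_compl m A $$ (i, j))"
    by (simp add: mult.commute)
qed

lemma qform_schur_compl_attained:
  assumes "hermitian_on {0..<Suc m} A" "A $$ (m, m) \<noteq> 0"
  obtains t where "qform {0..<Suc m} A (x(m := t)) = qform {0..<m} (schur_compl m A) x"
  using qform_schur_compl_square[OF assms, of x "- (\<Sum>j = 0..<m. A $$ (m, j) * x j) / A $$ (m, m)"] that
  by simp

lemma Re_qform_schur_compl_square:
  assumes herm: "hermitian_on {0..<Suc m} A" and piv: "0 < Re (A $$ (m, m))"
  shows "Re (qform {0..<Suc m} A (x(m := t))) = Re (qform {0..<m} (schur_compl m A) x)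
    + Re (A $$ (m, m)) * (norm (t + (\<Sum>j = 0..<m. A $$ (m, j) * x j) / A $$ (m, m)))\<^sup>2"
proof -
  define z where "z = t + (\<Sum>j = 0..<m. A $$ (m, j) * x j) / A $$ (m, m)"
  have "A $$ (m, m) = of_real (Re (A $$ (m, m)))" using hermitian_on_diag_real[OF herm] by simp
  then have "A $$ (m, m) * cnj z * z = of_real (Re (A $$ (m, m)) * (norm z)\<^sup>2)"
    by (metis complex_norm_square mult.assoc mult.commute of_real_mult)
  moreover have "A $$ (m, m) \<noteq> 0" using piv by auto
  ultimately show ?thesis using qform_schur_compl_square[OF herm, of x t] unfolding z_def by simp
qed

lemma qform_schur_compl_le:
  assumes "hermitian_on {0..<Suc m} A" "0 < Re (A $$ (m, m))"
  shows "Re (qform {0..<m} (schur_compl m A) x) \<le> Re (qform {0..<Suc m} A (x(m := t)))"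
  using Re_qform_schur_compl_square[OF assms, of x t] assms(2) by simp

lemma pd_on_schur_compl:
  assumes pd: "pd_on {0..<Suc m} A"
  shows "pd_on {0..<m} (schur_compl m A)"
  unfolding pd_on_def
proof (intro conjI allI impI)
  have herm: "hermitian_on {0..<Suc m} A" using pd unfolding pd_on_def by blast
  then show "hermitian_on {0..<m} (schur_compl m A)" by (rule hermitian_on_schur_compl)
  fix x :: "nat \<Rightarrow> complex" assume "\<exists>i\<in>{0..<m}. x i \<noteq> 0"
  then have "\<exists>i\<in>{0..<Suc m}. (x(m := t)) i \<noteq> 0" for t by force
  then have "0 < Re (qform {0..<Suc m} A (x(m := t)))" for t using pd unfolding pd_on_def by blast
  moreover have "A $$ (m, m) \<noteq> 0" using pd_on_diag_pos[OF pd] by force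
  ultimately show "0 < Re (qform {0..<m} (schur_compl m A) x)"
    by (metis qform_schur_compl_attained[OF herm])
qed

lemma psd_on_schur_compl:
  assumes psd: "psd_on {0..<Suc m} A" and piv: "A $$ (m, m) \<noteq> 0"
  shows "psd_on {0..<m} (schur_compl m A)"
  unfolding psd_on_def
proof (intro conjI allI)
  have herm: "hermitian_on {0..<Suc m} A" using psd unfolding psd_on_def by blast
  then show "hermitian_on {0..<m} (schur_compl m A)" by (rule hermitian_on_schur_compl)
  fix x :: "nat \<Rightarrow> complex"
  obtain t where "qform {0..<Suc m} A (x(m := t)) = qform {0..<m} (schur_compl m A) x"
    using qform_schur_compl_attained[OF herm piv] .
  then show "0 \<le> Re (qform {0..<m} (schur_compl m A) x)" using psd unfolding psd_on_def by metis
qed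

lemma pd_on_Suc_iff_schur_compl:
  assumes herm: "hermitian_on {0..<Suc m} A"
  shows "pd_on {0..<Suc m} A \<longleftrightarrow> 0 < Re (A $$ (m, m)) \<and> pd_on {0..<m} (schur_compl m A)"
proof
  assume "pd_on {0..<Suc m} A"
  then show "0 < Re (A $$ (m, m)) \<and> pd_on {0..<m} (schur_compl m A)"
    using pd_on_diag_pos pd_on_schur_compl by force
next
  assume "0 < Re (A $$ (m, m)) \<and> pd_on {0..<m} (schur_compl m A)"
  then have piv: "0 < Re (A $$ (m, m))" and pd: "pd_on {0..<m} (schur_compl m A)" by auto
  show "pd_on {0..<Suc m} A"
    unfolding pd_on_def
  proof (intro conjI allI impI herm)
    fix y :: "nat \<Rightarrow> complex" assume nz: "\<exists>i\<in>{0..<Suc m}. y i \<noteq> 0"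
    define z where "z = y m + (\<Sum>j = 0..<m. A $$ (m, j) * y j) / A $$ (m, m)"
    have Q: "Re (qform {0..<Suc m} A y) = Re (qform {0..<m} (schur_compl m A) y) + Re (A $$ (m, m)) * (norm z)\<^sup>2"
      using Re_qform_schur_compl_square[OF herm piv, of y "y m"] unfolding z_def by simp
    show "0 < Re (qform {0..<Suc m} A y)"
    proof (cases "\<exists>i\<in>{0..<m}. y i \<noteq> 0")
      case True
      then show ?thesis using Q pd piv unfolding pd_on_def by (simp add: add_pos_nonneg)
    next
      case False
      then have "y m \<noteq> 0" and "z = y m" using nz by (auto simp: z_def less_Suc_eq)
      moreover have "qform {0..<m} (schur_compl m A) y = 0" using False by (simp add: qform_def)
      ultimately show ?thesis using Q piv by simp
    qed
  qed
qed

lemma pd_mat_schur_compl: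
  assumes "pd_mat (Suc m) A"
  shows "pd_mat m (schur_compl m A)" and "0 < Re (A $$ (m, m))"
    and "A $$ (m, m) = of_real (Re (A $$ (m, m)))"
    and "Re (det A) = Re (A $$ (m, m)) * Re (det (schur_compl m A))"
proof -
  have A: "A \<in> carrier_mat (Suc m) (Suc m)" and pd: "pd_on {0..<Suc m} A"
    using assms unfolding pd_mat_def by auto
  show "pd_mat m (schur_compl m A)" using pd_on_schur_compl[OF pd] unfolding pd_mat_def by simp
  show piv: "0 < Re (A $$ (m, m))" using pd_on_diag_pos[OF pd, of m] by simp
  show real: "A $$ (m, m) = of_real (Re (A $$ (m, m)))"
    using pd hermitian_on_diag_real[of "{0..<Suc m}" A m] unfolding pd_on_def by simp
  then have "Im (A $$ (m, m)) = 0" by (metis Im_complex_of_real)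
  then show "Re (det A) = Re (A $$ (m, m)) * Re (det (schur_compl m A))"
    using det_schur_compl[OF A] piv by force
qed

lemma pd_mat_det_pos:
  assumes "pd_mat n A"
  shows "0 < Re (det A)"
  using assms
proof (induction n arbitrary: A)
  case 0
  then show ?case by (simp add: pd_mat_def)
next
  case (Suc m)
  then show ?case using pd_mat_schur_compl[OF Suc.prems] by simp
qed

lemma psd_mat_zero_pivot_det:
  assumes psd: "psd_mat n A" and k: "k < n" and zero: "A $$ (k, k) = 0"
  shows "det A = 0"
proof -
  have A: "A \<in> carrier_mat n n" and psd_on: "psd_on {0..<n} A" using psd unfolding psd_mat_def by auto
  have col: "A $$ (i, k) = 0" if "i < n" for i
    using psd_on_norm_sq_le[OF psd_on, of i k] that k zero by simp
  have "A *\<^sub>v unit_vec n k = 0\<^sub>v n"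
  proof (rule eq_vecI)
    fix i assume "i < dim_vec (0\<^sub>v n :: complex Matrix.vec)"
    then have "i < n" by simp
    have "(A *\<^sub>v unit_vec n k) $ i = (\<Sum>j = 0..<n. A $$ (i, j) * (if j = k then 1 else 0))"
      using A \<open>i < n\<close> k by (simp add: scalar_prod_def)
    also have "\<dots> = 0" using col[OF \<open>i < n\<close>] k by (simp add: if_distrib cong: if_cong)
    finally show "(A *\<^sub>v unit_vec n k) $ i = 0\<^sub>v n $ i" using \<open>i < n\<close> by simp
  qed (use A in simp)
  then show ?thesis using det_0_iff_vec_prod_zero[OF A] k by (metis unit_vec_carrier unit_vec_nonzero)
qed

lemma psd_mat_det_nonzero_imp_pd_mat:
  assumes "psd_mat n A" "det A \<noteq> 0"
  shows "pd_mat n A"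
  using assms
proof (induction n arbitrary: A)
  case 0
  then show ?case by (simp add: psd_mat_def pd_mat_def pd_on_def psd_on_def)
next
  case (Suc m)
  have A: "A \<in> carrier_mat (Suc m) (Suc m)" and psd: "psd_on {0..<Suc m} A"
    using Suc.prems unfolding psd_mat_def by auto
  have herm: "hermitian_on {0..<Suc m} A" using psd unfolding psd_on_def by blast
  have piv: "A $$ (m, m) \<noteq> 0" using psd_mat_zero_pivot_det[OF Suc.prems(1)] Suc.prems(2) by blast
  then have "0 < Re (A $$ (m, m))"
    using psd_on_diag_nonneg[OF psd] hermitian_on_diag_real[OF herm, of m]
    by (metis atLeastLessThan_iff finite_atLeastLessThan lessI order_le_less zero_le of_real_0)
  moreover have "pd_mat m (schur_compl m A)"
    using Suc.IH psd_on_schur_compl[OF psd piv] det_schur_compl[OF A piv] Suc.prems(2)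
    unfolding psd_mat_def by simp
  ultimately show ?case
    using A pd_on_Suc_iff_schur_compl[OF herm] unfolding pd_mat_def by simp
qed

section \<open>Determinant inequalities on the positive definite cone\<close>

lemma pd_mat_det_le_prod_diag:
  assumes "pd_mat n A"
  shows "Re (det A) \<le> (\<Prod>i<n. Re (A $$ (i, i)))"
  using assms
proof (induction n arbitrary: A)
  case 0
  then show ?case by (simp add: pd_mat_def)
next
  case (Suc m)
  note S = pd_mat_schur_compl[OF Suc.prems]
  have herm: "hermitian_on {0..<Suc m} A" using Suc.prems unfolding pd_mat_def pd_on_def by blast
  have real: "A $$ (m, m) = of_real (Re (A $$ (m, m)))" using hermitian_on_diag_real[OF herm] by simp
  have "Re (schur_compl m A $$ (i, i)) \<le> Re (A $$ (i, i))" if "i < m" for i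
  proof -
    have "A $$ (m, i) = cnj (A $$ (i, m))"
      using herm that unfolding hermitian_on_def by (metis atLeastLessThan_iff less_SucI lessI zero_le)
    then have "A $$ (i, m) * A $$ (m, i) / A $$ (m, m) = of_real ((norm (A $$ (i, m)))\<^sup>2 / Re (A $$ (m, m)))"
      by (subst real) (simp add: complex_mult_cnj cmod_power2 del: of_real_power)
    then show ?thesis using that S(2) by simp
  qed
  moreover have "0 < Re (schur_compl m A $$ (i, i))" if "i < m" for i
    using pd_on_diag_pos[of "{0..<m}" "schur_compl m A" i] S(1) that unfolding pd_mat_def by simp
  ultimately have "Re (det (schur_compl m A)) \<le> (\<Prod>i<m. Re (A $$ (i, i)))"
    using Suc.IH[OF S(1)] by (meson lessThan_iff less_imp_le order_trans prod_mono)
  then show ?case using S(2,4) by (simp add: mult_left_mono)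
qed

lemma psd_on_schur_compl_add_minus:
  assumes A: "A \<in> carrier_mat (Suc m) (Suc m)" and P: "P \<in> carrier_mat (Suc m) (Suc m)"
    and pd: "pd_on {0..<Suc m} A" and psd: "psd_on {0..<Suc m} P"
  shows "psd_on {0..<m} (schur_compl m (A + P) - schur_compl m A)"
proof -
  have hA: "hermitian_on {0..<Suc m} A" using pd unfolding pd_on_def by blast
  have pdC: "pd_on {0..<Suc m} (A + P)" using pd_on_add_psd_on[OF pd psd A P] by simp
  then have hC: "hermitian_on {0..<Suc m} (A + P)" unfolding pd_on_def by blast
  have pivA: "0 < Re (A $$ (m, m))" and pivC: "(A + P) $$ (m, m) \<noteq> 0"
    using pd_on_diag_pos[OF pd, of m] pd_on_diag_pos[OF pdC, of m] by auto
  show ?thesis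
    unfolding psd_on_def
  proof (intro conjI allI)
    show "hermitian_on {0..<m} (schur_compl m (A + P) - schur_compl m A)"
      using hermitian_on_schur_compl[OF hC] hermitian_on_schur_compl[OF hA]
      by (intro hermitian_on_minus) auto
    fix x :: "nat \<Rightarrow> complex"
    obtain t where t: "qform {0..<Suc m} (A + P) (x(m := t)) = qform {0..<m} (schur_compl m (A + P)) x"
      using qform_schur_compl_attained[OF hC pivC] .
    then have "qform {0..<m} (schur_compl m (A + P)) x = qform {0..<Suc m} A (x(m := t)) + qform {0..<Suc m} P (x(m := t))"
      using qform_add[OF A P] by simp
    moreover have "0 \<le> Re (qform {0..<Suc m} P (x(m := t)))" using psd unfolding psd_on_def by blast
    moreover have "Re (qform {0..<m} (schur_compl m A) x) \<le> Re (qform {0..<Suc m} A (x(m := t)))"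
      using qform_schur_compl_le[OF hA pivA] .
    ultimately show "0 \<le> Re (qform {0..<m} (schur_compl m (A + P) - schur_compl m A) x)"
      by (simp add: qform_minus[of _ m])
  qed
qed

lemma schur_compl_add_zero_pivot:
  assumes A: "A \<in> carrier_mat (Suc m) (Suc m)" and P: "P \<in> carrier_mat (Suc m) (Suc m)"
    and psd: "psd_on {0..<Suc m} P" and zero: "P $$ (m, m) = 0"
    and eq: "schur_compl m (A + P) = schur_compl m A"
  shows "P = 0\<^sub>m (Suc m) (Suc m)"
proof (rule eq_matI)
  have border: "P $$ (i, m) = 0" "P $$ (m, i) = 0" if "i < Suc m" for i
    using psd_on_norm_sq_le[OF psd, of i m] psd_on_norm_sq_le[OF psd, of m i] that zero by auto
  fix i j assume "i < dim_row (0\<^sub>m (Suc m) (Suc m) :: complex mat)" "j < dim_col (0\<^sub>m (Suc m) (Suc m) :: complex mat)"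
  then have ij: "i < Suc m" "j < Suc m" by simp_all
  show "P $$ (i, j) = 0\<^sub>m (Suc m) (Suc m) $$ (i, j)"
  proof (cases "i < m \<and> j < m")
    case True
    have "schur_compl m (A + P) $$ (i, j) = schur_compl m A $$ (i, j)" by (simp only: eq)
    with True ij show ?thesis using A P border zero by simp
  next
    case False
    with ij border show ?thesis by (auto simp: less_Suc_eq)
  qed
qed (use P in simp_all)

lemma pd_mat_det_mono:
  assumes "pd_mat n A" "psd_mat n P"
  shows "Re (det A) \<le> Re (det (A + P)) \<and> (P \<noteq> 0\<^sub>m n n \<longrightarrow> Re (det A) < Re (det (A + P)))"
  using assms
proof (induction n arbitrary: A P)
  case 0
  then show ?case by (auto simp: pd_mat_def psd_mat_def intro!: eq_matI)
next
  case (Suc m)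
  let ?S = "schur_compl m A" and ?T = "schur_compl m (A + P)"
  have A: "A \<in> carrier_mat (Suc m) (Suc m)" and P: "P \<in> carrier_mat (Suc m) (Suc m)"
    and pd: "pd_on {0..<Suc m} A" and psd: "psd_on {0..<Suc m} P"
    using Suc.prems unfolding pd_mat_def psd_mat_def by auto
  have C: "pd_mat (Suc m) (A + P)" using pd_mat_add_psd_mat[OF Suc.prems] .
  have R: "psd_mat m (?T - ?S)"
    using psd_on_schur_compl_add_minus[OF A P pd psd] unfolding psd_mat_def by (simp add: minus_carrier_mat)
  have "?S + (?T - ?S) = ?T" by (intro eq_matI) auto
  with Suc.IH[OF pd_mat_schur_compl(1)[OF Suc.prems(1)] R]
  have IH: "Re (det ?S) \<le> Re (det ?T)" "?T \<noteq> ?S \<Longrightarrow> Re (det ?S) < Re (det ?T)"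
    using minus_mat_eq_zero_iff[of ?T m m ?S] by auto
  define a p where "a = Re (A $$ (m, m))" and "p = Re (P $$ (m, m))"
  have a: "0 < a" and detA: "Re (det A) = a * Re (det ?S)"
    using pd_mat_schur_compl(2,4)[OF Suc.prems(1)] unfolding a_def by auto
  have p: "0 \<le> p" unfolding p_def using psd_on_diag_nonneg[OF psd] by simp
  have detC: "Re (det (A + P)) = (a + p) * Re (det ?T)"
    using pd_mat_schur_compl(4)[OF C] A P unfolding a_def p_def by simp
  have pos: "0 < Re (det ?T)" using pd_mat_det_pos[OF pd_mat_schur_compl(1)[OF C]] .
  have le1: "Re (det A) \<le> a * Re (det ?T)" and lt1: "?T \<noteq> ?S \<Longrightarrow> Re (det A) < a * Re (det ?T)"
    unfolding detA using a IH by simp_all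
  have le2: "a * Re (det ?T) \<le> Re (det (A + P))" and lt2: "p \<noteq> 0 \<Longrightarrow> a * Re (det ?T) < Re (det (A + P))"
    unfolding detC using p pos by (simp_all add: distrib_right)
  have "Re (det A) < Re (det (A + P))" if "P \<noteq> 0\<^sub>m (Suc m) (Suc m)"
  proof (cases "p = 0")
    case True
    then have "P $$ (m, m) = 0"
      using psd hermitian_on_diag_real[of "{0..<Suc m}" P m] unfolding p_def psd_on_def by simp
    then have "?T \<noteq> ?S" using schur_compl_add_zero_pivot[OF A P psd] that by blast
    then show ?thesis using lt1 le2 by linarith
  next
    case False
    then show ?thesis using le1 lt2 by linarith
  qed
  with le1 le2 show ?case by linarith
qed

lemma psd_on_schur_compl_midpoint:
  assumes A: "A \<in> carrier_mat (Suc m) (Suc m)" and B: "B \<in> carrier_mat (Suc m) (Suc m)"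
    and pdA: "pd_on {0..<Suc m} A" and pdB: "pd_on {0..<Suc m} B"
  shows "psd_on {0..<m}
    (schur_compl m ((1 / 2) \<cdot>\<^sub>m (A + B)) - (1 / 2) \<cdot>\<^sub>m (schur_compl m A + schur_compl m B))"
proof -
  let ?H = "(1 / 2) \<cdot>\<^sub>m (A + B)" and ?X = "(1 / 2) \<cdot>\<^sub>m (schur_compl m A + schur_compl m B)"
  have H: "?H \<in> carrier_mat (Suc m) (Suc m)" using A B by simp
  have hA: "hermitian_on {0..<Suc m} A" and hB: "hermitian_on {0..<Suc m} B"
    using pdA pdB unfolding pd_on_def by blast+
  have pdH: "pd_on {0..<Suc m} ?H" using pd_on_midpoint[OF pdA pdB A B] by simp
  then have hH: "hermitian_on {0..<Suc m} ?H" unfolding pd_on_def by blast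
  have pivA: "0 < Re (A $$ (m, m))" and pivB: "0 < Re (B $$ (m, m))" and pivH: "?H $$ (m, m) \<noteq> 0"
    using pd_on_diag_pos[OF pdA, of m] pd_on_diag_pos[OF pdB, of m] pd_on_diag_pos[OF pdH, of m] by auto
  show ?thesis
    unfolding psd_on_def
  proof (intro conjI allI)
    have "hermitian_on {0..<m} ?X"
      using hermitian_on_schur_compl[OF hA] hermitian_on_schur_compl[OF hB]
      by (intro hermitian_on_smult hermitian_on_add) auto
    then show "hermitian_on {0..<m} (schur_compl m ?H - ?X)"
      using hermitian_on_schur_compl[OF hH] by (intro hermitian_on_minus) auto
    fix x :: "nat \<Rightarrow> complex"
    obtain t where t: "qform {0..<Suc m} ?H (x(m := t)) = qform {0..<m} (schur_compl m ?H) x"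
      using qform_schur_compl_attained[OF hH pivH] .
    have AB: "A + B \<in> carrier_mat (Suc m) (Suc m)" using A B by simp
    have "Re (qform {0..<m} (schur_compl m ?H) x)
        = (Re (qform {0..<Suc m} A (x(m := t))) + Re (qform {0..<Suc m} B (x(m := t)))) / 2"
      unfolding t[symmetric] qform_smult[OF AB order.refl] qform_add[OF A B order.refl] by simp
    moreover have "Re (qform {0..<m} ?X x) = (Re (qform {0..<m} (schur_compl m A) x) + Re (qform {0..<m} (schur_compl m B) x)) / 2"
      unfolding qform_smult[OF add_carrier_mat[OF schur_compl_carrier] order.refl]
        qform_add[OF schur_compl_carrier schur_compl_carrier order.refl] by simp
    moreover have "Re (qform {0..<m} (schur_compl m A) x) \<le> Re (qform {0..<Suc m} A (x(m := t)))"
      "Re (qform {0..<m} (schur_compl m B) x) \<le> Re (qform {0..<Suc m} B (x(m := t)))"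
      using qform_schur_compl_le[OF hA pivA] qform_schur_compl_le[OF hB pivB] by auto
    ultimately show "0 \<le> Re (qform {0..<m} (schur_compl m ?H - ?X) x)"
      by (simp add: qform_minus[of _ m])
  qed
qed

lemma schur_compl_midpoint_minus_index:
  assumes "A \<in> carrier_mat (Suc m) (Suc m)" "B \<in> carrier_mat (Suc m) (Suc m)"
    and "A $$ (m, m) = B $$ (m, m)" "A $$ (m, m) \<noteq> 0" "i < m" "j < m"
  shows "(schur_compl m ((1 / 2) \<cdot>\<^sub>m (A + B)) - (1 / 2) \<cdot>\<^sub>m (schur_compl m A + schur_compl m B)) $$ (i, j)
    = (A $$ (i, m) - B $$ (i, m)) * (A $$ (m, j) - B $$ (m, j)) / (4 * A $$ (m, m))"
  using assms by (simp add: field_simps)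

lemma schur_compl_midpoint_eq_imp_eq:
  assumes pdA: "pd_mat (Suc m) A" and pdB: "pd_mat (Suc m) B"
    and piv: "Re (A $$ (m, m)) = Re (B $$ (m, m))"
    and S: "schur_compl m A = schur_compl m B"
    and SH: "schur_compl m ((1 / 2) \<cdot>\<^sub>m (A + B)) = (1 / 2) \<cdot>\<^sub>m (schur_compl m A + schur_compl m B)"
  shows "A = B"
proof -
  have A: "A \<in> carrier_mat (Suc m) (Suc m)" and B: "B \<in> carrier_mat (Suc m) (Suc m)"
    and hA: "hermitian_on {0..<Suc m} A" and hB: "hermitian_on {0..<Suc m} B"
    using pdA pdB unfolding pd_mat_def pd_on_def by auto
  have "A $$ (m, m) = of_real (Re (A $$ (m, m)))" "B $$ (m, m) = of_real (Re (B $$ (m, m)))"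
    using pd_mat_schur_compl(3) pdA pdB by blast+
  with piv have a: "A $$ (m, m) = B $$ (m, m)" by metis
  have a0: "A $$ (m, m) \<noteq> 0" using pd_mat_schur_compl(2)[OF pdA] by auto
  have conj: "A $$ (m, i) = cnj (A $$ (i, m))" "B $$ (m, i) = cnj (B $$ (i, m))" if "i < Suc m" for i
    using hA hB that unfolding hermitian_on_def by (metis atLeastLessThan_iff lessI zero_le)+
  have col: "A $$ (i, m) = B $$ (i, m)" if "i < m" for i
  proof -
    have "(A $$ (i, m) - B $$ (i, m)) * (A $$ (m, i) - B $$ (m, i)) = 0"
      using schur_compl_midpoint_minus_index[OF A B a a0 that that] a0 SH that by simp
    then have "(A $$ (i, m) - B $$ (i, m)) * cnj (A $$ (i, m) - B $$ (i, m)) = 0"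
      using conj that by simp
    then show ?thesis by simp
  qed
  have row: "A $$ (m, j) = B $$ (m, j)" if "j < m" for j
    using col[OF that] conj[of j] that by simp
  have "A $$ (i, j) = B $$ (i, j)" if "i < Suc m" "j < Suc m" for i j
  proof (cases "i < m \<and> j < m")
    case True
    have "schur_compl m A $$ (i, j) = schur_compl m B $$ (i, j)" by (simp only: S)
    with True show ?thesis using col row a a0 by simp
  next
    case False
    with that have "i = m \<or> j = m" by auto
    with that show ?thesis using col row a by (auto simp: less_Suc_eq)
  qed
  then show ?thesis using A B by (intro eq_matI) auto
qed

text \<open>The step of the midpoint inequality: AM-GM for the pivots, combined with the bounds on
  the determinants of the Schur complements.\<close>

lemma product_le_midpoint_square:
  fixes a b x y z w :: real
  assumes "0 < a" "0 < b" "0 < x" "0 < y" "x * y \<le> z\<^sup>2" "0 < z" "z \<le> w"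
  shows "(a * x) * (b * y) \<le> ((a + b) / 2 * w)\<^sup>2"
    and "a \<noteq> b \<or> x * y < z\<^sup>2 \<or> z < w \<Longrightarrow> (a * x) * (b * y) < ((a + b) / 2 * w)\<^sup>2"
proof -
  define h where "h = ((a + b) / 2)\<^sup>2"
  have h: "0 < h" unfolding h_def using assms by simp
  have "h - a * b = ((a - b) / 2)\<^sup>2" unfolding h_def by (simp add: power2_eq_square field_simps)
  then have "a * b \<le> h" and "a \<noteq> b \<Longrightarrow> a * b < h"
    by (metis diff_ge_0_iff_ge zero_le_power2, metis diff_gt_0_iff_gt zero_less_power2 divide_eq_0_iff
        right_minus_eq zero_neq_numeral)
  then have c1: "a * b * (x * y) \<le> h * (x * y)" and c1s: "a \<noteq> b \<Longrightarrow> a * b * (x * y) < h * (x * y)"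
    using assms by (auto intro!: mult_right_mono mult_strict_right_mono)
  have c2: "h * (x * y) \<le> h * z\<^sup>2" and c2s: "x * y < z\<^sup>2 \<Longrightarrow> h * (x * y) < h * z\<^sup>2"
    using assms h by simp_all
  have c3: "h * z\<^sup>2 \<le> h * w\<^sup>2" and c3s: "z < w \<Longrightarrow> h * z\<^sup>2 < h * w\<^sup>2"
    using assms h by (simp_all add: power_mono power_strict_mono)
  have eq: "(a * x) * (b * y) = a * b * (x * y)" "((a + b) / 2 * w)\<^sup>2 = h * w\<^sup>2"
    unfolding h_def by (simp_all add: power2_eq_square)
  show "(a * x) * (b * y) \<le> ((a + b) / 2 * w)\<^sup>2" unfolding eq using c1 c2 c3 by linarith
  show "a \<noteq> b \<or> x * y < z\<^sup>2 \<or> z < w \<Longrightarrow> (a * x) * (b * y) < ((a + b) / 2 * w)\<^sup>2"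
    unfolding eq using c1 c2 c3 c1s c2s c3s by linarith
qed

lemma pd_mat_det_schur_compl_midpoint:
  assumes A: "pd_mat (Suc m) A" and B: "pd_mat (Suc m) B"
  defines "X \<equiv> (1 / 2) \<cdot>\<^sub>m (schur_compl m A + schur_compl m B)"
    and "S \<equiv> schur_compl m ((1 / 2) \<cdot>\<^sub>m (A + B))"
  shows "Re (det X) \<le> Re (det S)" and "S \<noteq> X \<Longrightarrow> Re (det X) < Re (det S)"
proof -
  have X: "pd_mat m X" unfolding X_def using pd_mat_midpoint pd_mat_schur_compl(1) A B by blast
  then have SX: "S \<in> carrier_mat m m" "X \<in> carrier_mat m m" unfolding S_def pd_mat_def by auto
  have R: "psd_mat m (S - X)"
    using psd_on_schur_compl_midpoint[of A m B] A B unfolding S_def X_def psd_mat_def pd_mat_def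
    by (simp add: minus_carrier_mat)
  have "X + (S - X) = S" using SX by (intro eq_matI) auto
  with pd_mat_det_mono[OF X R] minus_mat_eq_zero_iff[OF SX]
  show "Re (det X) \<le> Re (det S)" and "S \<noteq> X \<Longrightarrow> Re (det X) < Re (det S)" by auto
qed

lemma pd_mat_det_midpoint:
  assumes "pd_mat n A" "pd_mat n B"
  shows "Re (det A) * Re (det B) \<le> (Re (det ((1 / 2) \<cdot>\<^sub>m (A + B))))\<^sup>2 \<and>
    (A \<noteq> B \<longrightarrow> Re (det A) * Re (det B) < (Re (det ((1 / 2) \<cdot>\<^sub>m (A + B))))\<^sup>2)"
  using assms
proof (induction n arbitrary: A B)
  case 0
  then show ?case by (auto simp: pd_mat_def intro!: eq_matI)
next
  case (Suc m)
  let ?H = "(1 / 2) \<cdot>\<^sub>m (A + B)" and ?X = "(1 / 2) \<cdot>\<^sub>m (schur_compl m A + schur_compl m B)"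
  note SA = pd_mat_schur_compl[OF Suc.prems(1)] and SB = pd_mat_schur_compl[OF Suc.prems(2)]
    and SH = pd_mat_schur_compl[OF pd_mat_midpoint[OF Suc.prems]]
  note IH = Suc.IH[OF SA(1) SB(1)] and S = pd_mat_det_schur_compl_midpoint[OF Suc.prems]
  define a b where "a = Re (A $$ (m, m))" and "b = Re (B $$ (m, m))"
  define dA dB dX dH where "dA = Re (det (schur_compl m A))" and "dB = Re (det (schur_compl m B))"
    and "dX = Re (det ?X)" and "dH = Re (det (schur_compl m ?H))"
  have "A \<in> carrier_mat (Suc m) (Suc m)" "B \<in> carrier_mat (Suc m) (Suc m)"
    using Suc.prems unfolding pd_mat_def by auto
  then have "Re (?H $$ (m, m)) = (a + b) / 2" unfolding a_def b_def by simp
  then have detH: "Re (det ?H) = (a + b) / 2 * dH" using SH(4) unfolding dH_def by simp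
  have detA: "Re (det A) = a * dA" and detB: "Re (det B) = b * dB"
    using SA(4) SB(4) unfolding a_def b_def dA_def dB_def by simp_all
  have pos: "0 < a" "0 < b" "0 < dA" "0 < dB" "0 < dX"
    using SA(2) SB(2) pd_mat_det_pos[OF SA(1)] pd_mat_det_pos[OF SB(1)]
      pd_mat_det_pos[OF pd_mat_midpoint[OF SA(1) SB(1)]]
    unfolding a_def b_def dA_def dB_def dX_def by simp_all
  have "a \<noteq> b \<or> schur_compl m A \<noteq> schur_compl m B \<or> schur_compl m ?H \<noteq> ?X" if "A \<noteq> B"
    using schur_compl_midpoint_eq_imp_eq[OF Suc.prems] that unfolding a_def b_def by blast
  then have "A \<noteq> B \<Longrightarrow> a \<noteq> b \<or> dA * dB < dX\<^sup>2 \<or> dX < dH"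
    using IH S unfolding dA_def dB_def dX_def dH_def by auto
  moreover have "dA * dB \<le> dX\<^sup>2" "dX \<le> dH"
    using IH S unfolding dA_def dB_def dX_def dH_def by simp_all
  ultimately have "(a * dA) * (b * dB) \<le> ((a + b) / 2 * dH)\<^sup>2 \<and>
      (A \<noteq> B \<longrightarrow> (a * dA) * (b * dB) < ((a + b) / 2 * dH)\<^sup>2)"
    using product_le_midpoint_square[OF pos(1-4) _ pos(5)] by blast
  then show ?case unfolding detA detB detH .
qed

section \<open>Completions\<close>

lemma is_completion_diag:
  assumes "graph_on n E" "is_completion n E A M" "i < n"
  shows "M $$ (i, i) = A $$ (i, i)"
  using assms unfolding graph_on_def is_completion_def by auto

lemma is_completion_midpoint:
  assumes "graph_on n E" "is_completion n E A M1" "is_completion n E A M2"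
  shows "is_completion n E A ((1 / 2) \<cdot>\<^sub>m (M1 + M2))"
  unfolding is_completion_def
proof (intro conjI ballI)
  show "(1 / 2) \<cdot>\<^sub>m (M1 + M2) \<in> carrier_mat n n"
    using assms(3) unfolding is_completion_def by simp
  fix ij assume "ij \<in> E"
  then obtain i j where ij: "ij = (i, j)" "(i, j) \<in> E" "i < n" "j < n"
    using assms(1) unfolding graph_on_def by (cases ij) auto
  with assms(2,3) show "case ij of (i, j) \<Rightarrow> ((1 / 2) \<cdot>\<^sub>m (M1 + M2)) $$ (i, j) = A $$ (i, j)"
    unfolding is_completion_def by auto
qed

lemma is_completion_add_diff:
  assumes g: "graph_on n E" and A: "A \<in> carrier_mat n n" and B: "B \<in> carrier_mat n n"
    and M: "is_completion n E A M" and D: "is_completion n E (B - A) D"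
  shows "is_completion n E B (M + D)"
  unfolding is_completion_def
proof (intro conjI ballI)
  show "M + D \<in> carrier_mat n n" using D unfolding is_completion_def by simp
  fix ij assume "ij \<in> E"
  then obtain i j where ij: "ij = (i, j)" "(i, j) \<in> E" "i < n" "j < n"
    using g unfolding graph_on_def by (cases ij) auto
  with M D A B show "case ij of (i, j) \<Rightarrow> (M + D) $$ (i, j) = B $$ (i, j)"
    unfolding is_completion_def by auto
qed

lemma is_completion_limit:
  assumes g: "graph_on n E" and X: "\<And>k. is_completion n E A (X k)" and M: "M \<in> carrier_mat n n"
    and lim: "\<And>i j. i < n \<Longrightarrow> j < n \<Longrightarrow> (\<lambda>k. X k $$ (i, j)) \<longlonglongrightarrow> M $$ (i, j)"
  shows "is_completion n E A M"
  unfolding is_completion_def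
proof (intro conjI M ballI)
  fix ij assume "ij \<in> E"
  then obtain i j where ij: "ij = (i, j)" "(i, j) \<in> E" "i < n" "j < n"
    using g unfolding graph_on_def by (cases ij) auto
  then have "(\<lambda>k. A $$ (i, j)) \<longlonglongrightarrow> M $$ (i, j)"
    using X lim[of i j] unfolding is_completion_def by auto
  then show "case ij of (i, j) \<Rightarrow> M $$ (i, j) = A $$ (i, j)"
    using ij by (simp add: LIMSEQ_const_iff)
qed

lemma is_completion_psd_entry_bound:
  assumes g: "graph_on n E" and M: "is_completion n E A M" "psd_mat n M" and ij: "i < n" "j < n"
  shows "norm (M $$ (i, j)) \<le> sqrt (Re (A $$ (i, i)) * Re (A $$ (j, j)))"
  using psd_on_norm_sq_le[of "{0..<n}" M i j] M(2) ij
    is_completion_diag[OF g M(1) ij(1)] is_completion_diag[OF g M(1) ij(2)]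
  unfolding psd_mat_def by (simp add: real_le_rsqrt)

lemma partial_pd_uniformly_positive:
  assumes "partial_pd n E A"
  obtains e where "0 < e" "\<And>C x. clique n E C \<Longrightarrow> e * (\<Sum>i\<in>C. (norm (x i))\<^sup>2) \<le> Re (qform C A x)"
proof -
  let ?K = "{C. clique n E C}"
  have fin: "finite ?K" by (rule finite_subset[of _ "Pow {0..<n}"]) (auto simp: clique_def)
  have "\<forall>C\<in>?K. \<exists>e>0. \<forall>x. e * (\<Sum>i\<in>C. (norm (x i))\<^sup>2) \<le> Re (qform C A x)"
  proof
    fix C assume "C \<in> ?K"
    then have "finite C" "pd_on C A"
      using assms finite_subset unfolding partial_pd_def clique_def by auto
    then show "\<exists>e>0. \<forall>x. e * (\<Sum>i\<in>C. (norm (x i))\<^sup>2) \<le> Re (qform C A x)"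
      by (metis pd_on_coercive)
  qed
  then obtain f where f: "\<And>C. C \<in> ?K \<Longrightarrow> 0 < f C"
    "\<And>C x. C \<in> ?K \<Longrightarrow> f C * (\<Sum>i\<in>C. (norm (x i))\<^sup>2) \<le> Re (qform C A x)"
    by metis
  define e where "e = Min (insert 1 (f ` ?K))"
  have "0 < e" unfolding e_def using fin f(1) by auto
  moreover have "e * (\<Sum>i\<in>C. (norm (x i))\<^sup>2) \<le> Re (qform C A x)" if "clique n E C" for C x
  proof -
    have "e \<le> f C" unfolding e_def using fin that by simp
    then have "e * (\<Sum>i\<in>C. (norm (x i))\<^sup>2) \<le> f C * (\<Sum>i\<in>C. (norm (x i))\<^sup>2)"
      by (intro mult_right_mono sum_nonneg) auto
    with f(2)[of C x] that show ?thesis by simp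
  qed
  ultimately show ?thesis using that by blast
qed

lemma partial_psd_shift:
  assumes g: "graph_on n E" and A: "partial_pd n E A"
    and e: "\<And>C x. clique n E C \<Longrightarrow> e * (\<Sum>i\<in>C. (norm (x i))\<^sup>2) \<le> Re (qform C A x)"
  shows "partial_psd n E (A + of_real (- e) \<cdot>\<^sub>m 1\<^sub>m n)"
  unfolding partial_psd_def
proof (intro conjI allI impI)
  have cA: "A \<in> carrier_mat n n" using A unfolding partial_pd_def by blast
  then show "A + of_real (- e) \<cdot>\<^sub>m 1\<^sub>m n \<in> carrier_mat n n" by simp
  show "herm_on_edges E (A + of_real (- e) \<cdot>\<^sub>m 1\<^sub>m n)"
    unfolding herm_on_edges_def
  proof (intro ballI)
    fix ij assume "ij \<in> E"
    then obtain i j where ij: "ij = (i, j)" "(i, j) \<in> E" "i < n" "j < n"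
      using g unfolding graph_on_def by (cases ij) auto
    then have "A $$ (j, i) = cnj (A $$ (i, j))" using A unfolding partial_pd_def herm_on_edges_def by auto
    with ij cA show "case ij of (i, j) \<Rightarrow>
        (A + of_real (- e) \<cdot>\<^sub>m 1\<^sub>m n) $$ (j, i) = cnj ((A + of_real (- e) \<cdot>\<^sub>m 1\<^sub>m n) $$ (i, j))"
      by simp
  qed
  fix C assume C: "clique n E C"
  then have sub: "C \<subseteq> {0..<n}" and "pd_on C A" using A unfolding clique_def partial_pd_def by auto
  then have "hermitian_on C A" unfolding pd_on_def by blast
  then show "psd_on C (A + of_real (- e) \<cdot>\<^sub>m 1\<^sub>m n)"
    unfolding psd_on_def using hermitian_on_add_scaled_one_mat[OF _ cA sub, of "- e"] e[OF C]
      qform_add_scaled_one_mat[OF cA sub, of "- e"] by simp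
qed

lemma psd_mat_shift_pd_mat:
  assumes M: "psd_mat n M" and e: "0 < e"
  shows "pd_mat n (M + of_real e \<cdot>\<^sub>m 1\<^sub>m n)"
proof -
  have cM: "M \<in> carrier_mat n n" and psd: "psd_on {0..<n} M" using M unfolding psd_mat_def by auto
  have "0 < Re (qform {0..<n} (M + of_real e \<cdot>\<^sub>m 1\<^sub>m n) x)" if nz: "\<exists>i\<in>{0..<n}. x i \<noteq> 0" for x
  proof -
    obtain k where "k \<in> {0..<n}" "x k \<noteq> 0" using nz by blast
    then have "0 < (\<Sum>i\<in>{0..<n}. (norm (x i))\<^sup>2)" by (intro sum_pos2[of _ k]) auto
    moreover have "0 \<le> Re (qform {0..<n} M x)" using psd unfolding psd_on_def by blast
    ultimately show ?thesis using e by (simp add: qform_add_scaled_one_mat[OF cM] add_nonneg_pos)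
  qed
  moreover have "hermitian_on {0..<n} (M + of_real e \<cdot>\<^sub>m 1\<^sub>m n)"
    using psd hermitian_on_add_scaled_one_mat[OF _ cM] unfolding psd_on_def by blast
  ultimately show ?thesis using cM unfolding pd_mat_def pd_on_def by simp
qed

lemma partial_pd_completion_exists:
  assumes g: "graph_on n E" and compl: "completable n E" and A: "partial_pd n E A"
  shows "\<exists>M. is_completion n E A M \<and> pd_mat n M"
proof -
  obtain e where e: "0 < e" "\<And>C x. clique n E C \<Longrightarrow> e * (\<Sum>i\<in>C. (norm (x i))\<^sup>2) \<le> Re (qform C A x)"
    using partial_pd_uniformly_positive[OF A] by blast
  obtain M where M: "is_completion n E (A + of_real (- e) \<cdot>\<^sub>m 1\<^sub>m n) M" "psd_mat n M"
    using compl partial_psd_shift[OF g A e(2)] unfolding completable_def by blast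
  have cA: "A \<in> carrier_mat n n" using A unfolding partial_pd_def by blast
  have "is_completion n E A (M + of_real e \<cdot>\<^sub>m 1\<^sub>m n)"
    unfolding is_completion_def
  proof (intro conjI ballI)
    show "M + of_real e \<cdot>\<^sub>m 1\<^sub>m n \<in> carrier_mat n n" using M(1) unfolding is_completion_def by simp
    fix ij assume "ij \<in> E"
    then obtain i j where ij: "ij = (i, j)" "(i, j) \<in> E" "i < n" "j < n"
      using g unfolding graph_on_def by (cases ij) auto
    then have "M $$ (i, j) = (A + of_real (- e) \<cdot>\<^sub>m 1\<^sub>m n) $$ (i, j)"
      using M(1) unfolding is_completion_def by auto
    with ij cA M(1) show "case ij of (i, j) \<Rightarrow> (M + of_real e \<cdot>\<^sub>m 1\<^sub>m n) $$ (i, j) = A $$ (i, j)"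
      unfolding is_completion_def by simp
  qed
  then show ?thesis using psd_mat_shift_pd_mat[OF M(2) e(1)] by blast
qed

lemma maxdet_completion_unique:
  assumes g: "graph_on n E" and M1: "is_maxdet_completion n E A M1" and M2: "is_maxdet_completion n E A M2"
  shows "M1 = M2"
proof (rule ccontr)
  assume "M1 \<noteq> M2"
  let ?H = "(1 / 2) \<cdot>\<^sub>m (M1 + M2)"
  have pd1: "pd_mat n M1" and pd2: "pd_mat n M2"
    using M1 M2 unfolding is_maxdet_completion_def by auto
  have "pd_mat n ?H" using pd_mat_midpoint[OF pd1 pd2] .
  moreover have "is_completion n E A ?H"
    using is_completion_midpoint[OF g] M1 M2 unfolding is_maxdet_completion_def by blast
  ultimately have "Re (det ?H) \<le> Re (det M1)" using M1 unfolding is_maxdet_completion_def by blast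
  moreover have "Re (det M1) = Re (det M2)" using M1 M2 unfolding is_maxdet_completion_def by force
  moreover have "Re (det M1) * Re (det M2) < (Re (det ?H))\<^sup>2"
    using pd_mat_det_midpoint[OF pd1 pd2] \<open>M1 \<noteq> M2\<close> by blast
  moreover have "0 < Re (det ?H)" using pd_mat_det_pos[OF \<open>pd_mat n ?H\<close>] .
  moreover have "(Re (det ?H))\<^sup>2 \<le> (Re (det M1))\<^sup>2"
    using calculation by (intro power_mono) auto
  ultimately show False by (simp add: power2_eq_square)
qed

lemma maxdet_completion_the:
  assumes "graph_on n E" "is_maxdet_completion n E A M"
  shows "\<exists>!M. is_maxdet_completion n E A M" and "(THE M. is_maxdet_completion n E A M) = M"
  using assms maxdet_completion_unique by blast+

lemma pd_completions_convergent_subseq: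
  fixes X :: "nat \<Rightarrow> complex mat"
  assumes g: "graph_on n E" and X: "\<And>k. is_completion n E A (X k)" "\<And>k. pd_mat n (X k)"
  obtains M r where "strict_mono r" "is_completion n E A M" "psd_mat n M"
    "(\<lambda>k. Re (det (X (r k)))) \<longlonglongrightarrow> Re (det M)"
proof -
  have bnd: "bounded (range (\<lambda>k. X k $$ ij))" if "ij \<in> {0..<n} \<times> {0..<n}" for ij
    using is_completion_psd_entry_bound[OF g X(1) pd_mat_imp_psd_mat[OF X(2)]] that
    unfolding bounded_iff by (cases ij) auto
  have fin: "finite ({0..<n} \<times> {0..<n})" by simp
  from bounded_coordinates_convergent_subseq[of _ "\<lambda>k ij. X k $$ ij", OF fin bnd]
  obtain l r where r: "strict_mono r"
    and lim: "\<And>ij. ij \<in> {0..<n} \<times> {0..<n} \<Longrightarrow> (\<lambda>k. X (r k) $$ ij) \<longlonglongrightarrow> l ij"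
    by blast
  define M where "M = Matrix.mat n n l"
  have cX: "X k \<in> carrier_mat n n" for k using X(2) unfolding pd_mat_def by blast
  have cM: "M \<in> carrier_mat n n" unfolding M_def by simp
  have limM: "(\<lambda>k. X (r k) $$ (i, j)) \<longlonglongrightarrow> M $$ (i, j)" if "i < n" "j < n" for i j
    using lim[of "(i, j)"] that unfolding M_def by simp
  have psd: "psd_mat n M"
    using psd_on_limit[of "{0..<n}" "\<lambda>k. X (r k)" M] X(2) cM limM
    unfolding psd_mat_def pd_mat_def by (auto intro: pd_on_imp_psd_on)
  have det: "(\<lambda>k. Re (det (X (r k)))) \<longlonglongrightarrow> Re (det M)"
    using tendsto_det[OF cX cM limM] by (intro tendsto_Re)
  show ?thesis using r is_completion_limit[OF g X(1) cM limM] psd det by (rule that)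
qed

lemma maxdet_completion_exists:
  assumes g: "graph_on n E" and M0: "is_completion n E A M0" "pd_mat n M0"
  shows "\<exists>M. is_maxdet_completion n E A M"
proof -
  define D where "D = {Re (det M) | M. is_completion n E A M \<and> pd_mat n M}"
  have "Re (det M) \<le> (\<Prod>i<n. Re (A $$ (i, i)))" if "is_completion n E A M" "pd_mat n M" for M
    using pd_mat_det_le_prod_diag[OF that(2)] is_completion_diag[OF g that(1)] by simp
  then have bdd: "bdd_above D" unfolding D_def bdd_above_def by blast
  have upper: "Re (det M) \<le> Sup D" if "is_completion n E A M" "pd_mat n M" for M
    using bdd that unfolding D_def by (intro cSup_upper) auto
  have "\<exists>M. is_completion n E A M \<and> pd_mat n M \<and> Sup D - inverse (real (Suc k)) < Re (det M)" for k
    using less_cSup_iff[OF _ bdd, of "Sup D - inverse (real (Suc k))"] M0 unfolding D_def by force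
  then obtain X where X: "\<And>k. is_completion n E A (X k)" "\<And>k. pd_mat n (X k)"
    and near: "\<And>k. Sup D - inverse (real (Suc k)) < Re (det (X k))" by metis
  obtain M r where r: "strict_mono r" and M: "is_completion n E A M" "psd_mat n M"
    and lim: "(\<lambda>k. Re (det (X (r k)))) \<longlonglongrightarrow> Re (det M)"
    by (rule pd_completions_convergent_subseq[OF g X])
  have "(\<lambda>k. Sup D - inverse (real (Suc (r k)))) \<longlonglongrightarrow> Sup D"
    using tendsto_diff[OF tendsto_const LIMSEQ_subseq_LIMSEQ[OF LIMSEQ_inverse_real_of_nat r], of "Sup D"]
    by (simp add: comp_def)
  with lim have "Sup D \<le> Re (det M)" using near by (intro LIMSEQ_le) (auto intro: less_imp_le)
  moreover have "0 < Sup D" using pd_mat_det_pos[OF M0(2)] upper[OF M0] by linarith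
  ultimately have "pd_mat n M" using psd_mat_det_nonzero_imp_pd_mat[OF M(2)] by force
  then show ?thesis
    using M(1) upper \<open>Sup D \<le> Re (det M)\<close> unfolding is_maxdet_completion_def by force
qed

theorem theorem6p12:
  fixes n :: nat and E :: "(nat \<times> nat) set" and A B :: "complex mat"
  assumes "graph_on n E"
    and "completable n E"
    and "partial_pd n E A"
    and "partial_le n E A B"
    and "B \<in> carrier_mat n n"
  shows "(\<exists>!Ah. is_maxdet_completion n E A Ah) \<and> (\<exists>!Bh. is_maxdet_completion n E B Bh) \<and>
         0 < Re (det (THE Ah. is_maxdet_completion n E A Ah)) \<and>
         Re (det (THE Ah. is_maxdet_completion n E A Ah))
           \<le> Re (det (THE Bh. is_maxdet_completion n E B Bh))"
proof -
  obtain M0 where "is_completion n E A M0" "pd_mat n M0"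
    using partial_pd_completion_exists[OF assms(1-3)] by blast
  then obtain Ah where Ah: "is_maxdet_completion n E A Ah"
    using maxdet_completion_exists[OF assms(1)] by blast
  then have Ah_pd: "pd_mat n Ah" and Ah_comp: "is_completion n E A Ah"
    unfolding is_maxdet_completion_def by auto
  obtain D where D: "is_completion n E (B - A) D" "psd_mat n D"
    using assms(2,4) unfolding completable_def partial_le_def by blast
  have A: "A \<in> carrier_mat n n" using assms(3) unfolding partial_pd_def by blast
  have N: "is_completion n E B (Ah + D)" "pd_mat n (Ah + D)"
    using is_completion_add_diff[OF assms(1) A assms(5) Ah_comp D(1)] pd_mat_add_psd_mat[OF Ah_pd D(2)] .
  then obtain Bh where Bh: "is_maxdet_completion n E B Bh"
    using maxdet_completion_exists[OF assms(1)] by blast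
  have "Re (det Ah) \<le> Re (det (Ah + D))" using pd_mat_det_mono[OF Ah_pd D(2)] by blast
  also have "\<dots> \<le> Re (det Bh)" using Bh N unfolding is_maxdet_completion_def by blast
  finally show ?thesis
    using maxdet_completion_the[OF assms(1) Ah] maxdet_completion_the[OF assms(1) Bh] pd_mat_det_pos[OF Ah_pd]
    by simp
qed

end
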